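(* Let $n\ge 1$, let $\omega\in(\mathbb{Z}/n\mathbb{Z})^\times$ (represented by an integer), let $r\in\mathbb{Z}/n\mathbb{Z}$, and let $X=\langle\omega\rangle r$. Put $k=\gcd\left(\omega-1,\frac{n}{\gcd(r,n)}\right)$. Then $\sigma_X$ has $k$-fold dihedral symmetry: its image $\{\sigma_X(y):y\in\mathbb{Z}/n\mathbb{Z}\}$ is invariant under complex conjugation and under rotation by $2\pi/k$ about the origin.
   Context: Write $e(\theta)=\exp(2\pi i\theta)$. For a subgroup $A$ of $(\mathbb{Z}/n\mathbb{Z})^\times$ and $r\in\mathbb{Z}/n\mathbb{Z}$, let $X=Ar=\{ar:a\in A\}$ and $\sigma_X(y)=\sum_{x\in X}e\left(\frac{xy}{n}\right)$ for $y\in\mathbb{Z}/n\mathbb{Z}$. $\langle\omega\rangle$ is the cyclic subgroup generated by $\omega$. A function is said to have $k$-fold dihedral symmetry if its image is invariant under the natural action of the dihedral group of order $2k$, i.e. under complex conjugation and rotation by $2\pi/k$ about $0$. *)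

theory Defs
  imports "HOL-Analysis.Analysis"
begin

text \<open>Z/nZ is represented by the integers {0..<n}; residues are reduced with mod n.\<close>

definition e :: "real \<Rightarrow> complex" where
  "e \<theta> = exp (2 * pi * \<i> * complex_of_real \<theta>)"

definition cyc_subgroup :: "int \<Rightarrow> int \<Rightarrow> int set" where
  "cyc_subgroup n w = {(w ^ j) mod n | j. j \<in> (UNIV :: nat set)}"

definition orbit_set :: "int \<Rightarrow> int set \<Rightarrow> int \<Rightarrow> int set" where
  "orbit_set n A r = {(a * r) mod n | a. a \<in> A}"

definition sigma :: "int \<Rightarrow> int set \<Rightarrow> int \<Rightarrow> complex" where
  "sigma n X y = (\<Sum>x\<in>X. e (real_of_int (x * y) / real_of_int n))"

definition has_dihedral_symmetry :: "nat \<Rightarrow> complex set \<Rightarrow> bool" where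
  "has_dihedral_symmetry k S \<longleftrightarrow>
     cnj ` S = S \<and> (\<lambda>z. e (1 / real k) * z) ` S = S"

end

theory Submission
  imports Defs "HOL-Number_Theory.Cong"
begin

text \<open>Write \<open>n = g n'\<close> and \<open>r = g r'\<close> with \<open>g = gcd r n\<close>. Since \<open>k\<close> divides \<open>n'\<close>, the
  residue \<open>r'\<close> is invertible mod \<open>k\<close>, say \<open>r' s \<equiv> 1\<close>; put \<open>t = (n'/k) s\<close>. Every \<open>x \<in> X\<close> is
  \<open>\<omega>\<^sup>j r\<close> mod \<open>n\<close>, and \<open>\<omega> \<equiv> 1\<close> mod \<open>k\<close>, so \<open>x t \<equiv> n/k\<close> mod \<open>n\<close> for all of them. Hence translating
  \<open>y\<close> by \<open>t\<close> multiplies \<open>\<sigma>\<^sub>X(y)\<close> by \<open>e(1/k)\<close>, while negating \<open>y\<close> conjugates it. Both maps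
  are injective and send the finite image of \<open>\<sigma>\<^sub>X\<close> into itself, so they permute it.\<close>

lemma e_add: "e (a + b) = e a * e b"
  unfolding e_def by (simp add: distrib_left distrib_right exp_add)

lemma e_of_int: "e (of_int m) = 1"
proof -
  have "e (of_int m) = exp (0 + \<i> * (of_int m * (of_real pi * 2)))"
    unfolding e_def by (simp add: algebra_simps)
  also have "\<dots> = 1" by (subst exp_plus_2pin) simp
  finally show ?thesis .
qed

lemma e_add_of_int: "e (a + of_int m) = e a"
  by (simp add: e_add e_of_int)

lemma cnj_e: "cnj (e a) = e (- a)"
  unfolding e_def by (simp add: exp_cnj)

lemma e_nonzero: "e a \<noteq> 0"
  unfolding e_def by simp

lemma e_frac_cong:
  fixes a b n :: int
  assumes "[a = b] (mod n)"
  shows "e (of_int a / of_int n) = e (of_int b / of_int n)"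
proof (cases "n = 0")
  case False
  from assms obtain m where "a - b = n * m"
    by (metis cong_iff_dvd_diff dvdE)
  with False have "of_int a / of_int n = of_int b / of_int n + (of_int m :: real)"
    by (simp add: field_simps)
  then show ?thesis by (simp add: e_add_of_int)
qed (use assms in \<open>simp add: cong_def\<close>)

lemma sigma_mod: "sigma n X (y mod n) = sigma n X y"
  unfolding sigma_def by (intro sum.cong refl e_frac_cong cong_mult cong_refl) (simp add: cong_def)

lemma cnj_sigma: "cnj (sigma n X y) = sigma n X (- y)"
  unfolding sigma_def by (simp add: cnj_e)

lemma sigma_add:
  assumes "\<And>x. x \<in> X \<Longrightarrow> e (of_int (x * t) / of_int n) = c"
  shows "sigma n X (y + t) = c * sigma n X y"
proof -
  have "sigma n X (y + t) = (\<Sum>x\<in>X. e (of_int (x * t) / of_int n) * e (of_int (x * y) / of_int n))"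
    unfolding sigma_def
    by (intro sum.cong refl) (simp add: e_add[symmetric] distrib_left add_divide_distrib add.commute)
  also have "\<dots> = (\<Sum>x\<in>X. c * e (of_int (x * y) / of_int n))"
    by (intro sum.cong refl) (simp only: assms)
  also have "\<dots> = c * sigma n X y"
    unfolding sigma_def by (simp add: sum_distrib_left)
  finally show ?thesis .
qed

lemma sigma_image_invariant:
  assumes "n > 0" and "inj h" and "\<And>y. h (sigma n X y) = sigma n X (\<tau> y)"
  shows "h ` (\<lambda>y. sigma n X y) ` {0..<n} = (\<lambda>y. sigma n X y) ` {0..<n}"
proof (rule endo_inj_surj)
  show "h ` (\<lambda>y. sigma n X y) ` {0..<n} \<subseteq> (\<lambda>y. sigma n X y) ` {0..<n}"
  proof clarify
    fix y
    have "h (sigma n X y) = sigma n X (\<tau> y mod n)"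
      by (simp add: assms(3) sigma_mod)
    moreover have "\<tau> y mod n \<in> {0..<n}" using \<open>n > 0\<close> by simp
    ultimately show "h (sigma n X y) \<in> (\<lambda>y. sigma n X y) ` {0..<n}" by blast
  qed
qed (use assms(2) in \<open>auto intro: inj_on_subset\<close>)

lemma orbit_cyc_subgroup_cong:
  assumes "x \<in> orbit_set n (cyc_subgroup n w) r"
  obtains j :: nat where "[x = w ^ j * r] (mod n)"
proof -
  from assms obtain j :: nat where "x = ((w ^ j mod n) * r) mod n"
    unfolding orbit_set_def cyc_subgroup_def by auto
  then have "[x = w ^ j * r] (mod n)"
    by (metis cong_mod_left cong_mult cong_refl)
  then show ?thesis by (rule that)
qed

lemma exists_multiplier_cong_div:
  fixes n r w k :: int
  assumes "n \<noteq> 0" and "k dvd w - 1" and "k dvd n div gcd r n"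
  obtains t where "\<And>j :: nat. [w ^ j * r * t = n div k] (mod n)"
proof -
  define g where "g = gcd r n"
  obtain n' r' where n: "n = g * n'" and r: "r = g * r'"
    unfolding g_def by (meson gcd_dvd1 gcd_dvd2 dvdE)
  have "g \<noteq> 0" using \<open>n \<noteq> 0\<close> unfolding g_def by simp
  then have "r div g = r'" and n_div: "n div g = n'"
    using n r by simp_all
  then have "coprime r' n'"
    using div_gcd_coprime[of r n] \<open>n \<noteq> 0\<close> unfolding g_def by auto
  moreover obtain c where n': "n' = k * c"
    using assms(3) n_div unfolding g_def by blast
  ultimately have "coprime r' k" by simp
  then obtain s where s: "[r' * s = 1] (mod k)"
    using cong_solve_coprime_int by blast
  have w: "[w = 1] (mod k)" using assms(2) by (simp add: cong_iff_dvd_diff)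
  show ?thesis
  proof (rule that[of "c * s"])
    fix j :: nat
    have "[w ^ j * (r' * s) = 1 ^ j * 1] (mod k)"
      by (intro cong_mult cong_pow w s)
    then have "(g * c) * k dvd (g * c) * (w ^ j * (r' * s) - 1)"
      by (simp add: cong_iff_dvd_diff)
    moreover have "n div k = g * c"
      using \<open>n \<noteq> 0\<close> n n' by auto
    ultimately show "[w ^ j * r * (c * s) = n div k] (mod n)"
      by (simp add: cong_iff_dvd_diff n n' r algebra_simps)
  qed
qed

lemma sigma_orbit_rotation:
  fixes n r w k :: int
  defines "X \<equiv> orbit_set n (cyc_subgroup n w) r"
  assumes "n \<noteq> 0" and "k dvd w - 1" and "k dvd n div gcd r n"
  obtains t where "\<And>y. sigma n X (y + t) = e (1 / of_int k) * sigma n X y"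
proof -
  obtain t where t: "\<And>j :: nat. [w ^ j * r * t = n div k] (mod n)"
    using exists_multiplier_cong_div assms(2-4) by blast
  have "k dvd n"
    using \<open>k dvd n div gcd r n\<close> by (metis dvd_mult_div_cancel dvd_trans dvd_triv_right gcd_dvd2)
  then have frac: "real_of_int (n div k) / of_int n = 1 / of_int k"
    using \<open>n \<noteq> 0\<close> by auto
  have "e (of_int (x * t) / of_int n) = e (1 / of_int k)" if "x \<in> X" for x
  proof -
    obtain j :: nat where "[x = w ^ j * r] (mod n)"
      using \<open>x \<in> X\<close> unfolding X_def by (rule orbit_cyc_subgroup_cong)
    then have "[x * t = n div k] (mod n)"
      using t cong_trans cong_scalar_right by blast
    then show ?thesis by (metis e_frac_cong frac)
  qed
  then show ?thesis by (intro that sigma_add)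
qed

theorem proposition3p1:
  fixes n w r :: int
  assumes "n \<ge> 1"
    and "coprime w n"
  defines "X \<equiv> orbit_set n (cyc_subgroup n w) r"
    and "k \<equiv> gcd (w - 1) (n div gcd r n)"
  shows "has_dihedral_symmetry (nat k) ((\<lambda>y. sigma n X y) ` {0..<n})"
proof -
  have "n div gcd r n \<noteq> 0"
    using \<open>n \<ge> 1\<close> by (simp add: dvd_div_eq_0_iff)
  then have "k > 0" unfolding k_def by (simp add: le_less)
  obtain t where "\<And>y. sigma n X (y + t) = e (1 / of_int k) * sigma n X y"
    using sigma_orbit_rotation[of n k w r] \<open>n \<ge> 1\<close> unfolding X_def k_def by auto
  then have "\<And>y. e (1 / real (nat k)) * sigma n X y = sigma n X (y + t)"
    using \<open>k > 0\<close> by simp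
  then show ?thesis
    unfolding has_dihedral_symmetry_def using \<open>n \<ge> 1\<close>
    by (simp add: sigma_image_invariant cnj_sigma inj_on_def e_nonzero)
qed

end
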